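(* For every model $\rho$, every $n \geq 1$, $\phi$, $\phi_1$ and $\phi_2$, and every $1 < i \leq |\rho|$, the following hold: 1. $(\rho, i) \models \phi_1 \mathrel{\mathbb{S}}_n \phi_2$ iff $(\rho, i) \models \phi_2$, or $(\rho, i) \models \phi_1$ and $(\rho, i-1) \models \phi_1 \mathrel{\mathbb{S}}_n \phi_2$ and $n - (\tau_i - \tau_{i-1}) \geq \mathfrak{m}(\rho, i-1, \phi_1 \mathrel{\mathbb{S}}_n \phi_2).$ 2. $(\rho, i) \models \mathsf{P}^{<}_n \phi$ iff $(\rho, i - 1) \models \phi$ and $\tau_i - \tau_{i-1} < n$, or $(\rho, i-1) \models \mathsf{P}^{<}_n \phi$ and $n - (\tau_i - \tau_{i-1}) \geq \mathfrak{m}(\rho, i-1, \mathsf{P}^{<}_n \phi).$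
   Context: A model is $\rho=(\pi,\tau)$ with $\pi$ a finite sequence of states and $\tau$ a non-decreasing sequence of natural-number timestamps, $|\pi|=|\tau|=|\rho|$. Semantics: $(\rho,i)\models\mathsf{P}^{<}_n\phi$ (strict metric past "once") iff $i>1$ and there is $j<i$ with $(\rho,j)\models\phi$ and $\tau_i-\tau_j<n$; $(\rho,i)\models\phi_1\mathrel{\mathbb{S}}_n\phi_2$ iff there is $j\le i$ with $(\rho,j)\models\phi_2$, $(\rho,k)\models\phi_1$ for all $j<k\le i$, and $\tau_i-\tau_j<n$. It is known (minimality) that if $(\rho,i)\models\phi_1\mathrel{\mathbb{S}}_n\phi_2$ (resp. $\mathsf{P}^{<}_n\phi$) then there is a least $m\le n$ such that $(\rho,i)\models\phi_1\mathrel{\mathbb{S}}_m\phi_2$ (resp. $\mathsf{P}^{<}_m\phi$), i.e. it fails for every $0<k<m$. The function $\mathfrak{m}(\rho,i,\psi)$ equals this least $m$ if $\psi$ is of the form $\phi_1\mathrel{\mathbb{S}}_n\phi_2$ or $\mathsf{P}^{<}_n\phi'$ and $(\rho,i)\models\psi$, and $0$ otherwise. *)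

theory Defs
  imports Main
begin

datatype 'p formula =
    TT
  | Atom 'p
  | Neg "'p formula"
  | And "'p formula" "'p formula"
  | Since nat "'p formula" "'p formula"
  | Once nat "'p formula"

text \<open>A model rho = (pi, tau): pi a finite sequence of states (sets of atomic
  propositions), tau a sequence of natural-number timestamps.
  Positions are 1-based: state i is pi ! (i - 1).\<close>
type_synonym 'p model = "'p set list \<times> nat list"

definition states :: "'p model \<Rightarrow> 'p set list" where
  "states \<rho> = fst \<rho>"

definition ts :: "'p model \<Rightarrow> nat \<Rightarrow> nat" where
  "ts \<rho> i = snd \<rho> ! (i - 1)"

definition len :: "'p model \<Rightarrow> nat" where
  "len \<rho> = length (fst \<rho>)"

definition wf_model :: "'p model \<Rightarrow> bool" where
  "wf_model \<rho> \<longleftrightarrow> length (fst \<rho>) = length (snd \<rho>) \<and> sorted (snd \<rho>)"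

fun sat :: "'p model \<Rightarrow> nat \<Rightarrow> 'p formula \<Rightarrow> bool" where
  "sat \<rho> i TT = True"
| "sat \<rho> i (Atom p) = (p \<in> states \<rho> ! (i - 1))"
| "sat \<rho> i (Neg \<phi>) = (\<not> sat \<rho> i \<phi>)"
| "sat \<rho> i (And \<phi> \<psi>) = (sat \<rho> i \<phi> \<and> sat \<rho> i \<psi>)"
| "sat \<rho> i (Since n \<phi>1 \<phi>2) =
     (\<exists>j. 1 \<le> j \<and> j \<le> i \<and> sat \<rho> j \<phi>2 \<and> (\<forall>k. j < k \<and> k \<le> i \<longrightarrow> sat \<rho> k \<phi>1)
          \<and> ts \<rho> i - ts \<rho> j < n)"
| "sat \<rho> i (Once n \<phi>) =
     (i > 1 \<and> (\<exists>j. 1 \<le> j \<and> j < i \<and> sat \<rho> j \<phi> \<and> ts \<rho> i - ts \<rho> j < n))"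

fun mfun :: "'p model \<Rightarrow> nat \<Rightarrow> 'p formula \<Rightarrow> nat" where
  "mfun \<rho> i (Since n \<phi>1 \<phi>2) =
     (if sat \<rho> i (Since n \<phi>1 \<phi>2) then (LEAST m. sat \<rho> i (Since m \<phi>1 \<phi>2)) else 0)"
| "mfun \<rho> i (Once n \<phi>) =
     (if sat \<rho> i (Once n \<phi>) then (LEAST m. sat \<rho> i (Once m \<phi>)) else 0)"
| "mfun \<rho> i _ = 0"

end

theory Submission
  imports Defs
begin

text \<open>Write \<open>d = \<tau>\<^sub>i - \<tau>\<^sub>i\<^sub>-\<^sub>1\<close>. Since timestamps are monotone, a witness \<open>j < i\<close> lies within
  distance \<open>n\<close> of \<open>i\<close> exactly when \<open>d \<le> n\<close> and it lies within distance \<open>n - d\<close> of \<open>i - 1\<close>.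
  This unrolls both operators by one step with the bound shrunk to \<open>n - d\<close>. As satisfaction
  is upward closed in the bound, the operator holding at \<open>i - 1\<close> with bound \<open>n - d\<close> is the
  same as its least satisfying bound \<open>\<frak>m\<close> being at most \<open>n - d\<close>.\<close>

lemma ts_mono:
  assumes "wf_model \<rho>" "1 \<le> j" "j \<le> k" "k \<le> len \<rho>"
  shows "ts \<rho> j \<le> ts \<rho> k"
  using assms unfolding wf_model_def ts_def len_def
  by (intro sorted_nth_mono) auto

lemma ts_diff_less_iff_prev:
  assumes "wf_model \<rho>" "1 \<le> j" "j < i" "i \<le> len \<rho>"
  shows "ts \<rho> i - ts \<rho> j < n \<longleftrightarrow>
    ts \<rho> i - ts \<rho> (i - 1) \<le> n \<and> ts \<rho> (i - 1) - ts \<rho> j < n - (ts \<rho> i - ts \<rho> (i - 1))"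
proof -
  have "ts \<rho> j \<le> ts \<rho> (i - 1)" "ts \<rho> (i - 1) \<le> ts \<rho> i"
    using assms by (auto intro: ts_mono)
  then show ?thesis by linarith
qed

lemma sat_Since_mono: "sat \<rho> i (Since a \<phi>1 \<phi>2) \<Longrightarrow> a \<le> b \<Longrightarrow> sat \<rho> i (Since b \<phi>1 \<phi>2)"
  by (auto 0 3 simp del: sat.simps(1-4) intro: order.strict_trans2)

lemma sat_Once_mono: "sat \<rho> i (Once a \<phi>) \<Longrightarrow> a \<le> b \<Longrightarrow> sat \<rho> i (Once b \<phi>)"
  by (auto 0 3 simp del: sat.simps(1-4) intro: order.strict_trans2)

lemma Least_le_diff_iff:
  fixes P :: "nat \<Rightarrow> bool"
  assumes "P n" and upward_closed: "\<And>a b. P a \<Longrightarrow> a \<le> b \<Longrightarrow> P b"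
  shows "int (LEAST m. P m) \<le> int n - int d \<longleftrightarrow> d \<le> n \<and> P (n - d)"
proof (cases "d \<le> n")
  case True
  have "(LEAST m. P m) \<le> n - d \<longleftrightarrow> P (n - d)"
    using upward_closed[OF LeastI[of P, OF \<open>P n\<close>]] Least_le[of P] by blast
  with True show ?thesis by linarith
qed simp

lemma mfun_Since_le_iff:
  assumes "sat \<rho> i (Since n \<phi>1 \<phi>2)"
  shows "int (mfun \<rho> i (Since n \<phi>1 \<phi>2)) \<le> int n - int d \<longleftrightarrow>
    d \<le> n \<and> sat \<rho> i (Since (n - d) \<phi>1 \<phi>2)"
  using Least_le_diff_iff[where P = "\<lambda>m. sat \<rho> i (Since m \<phi>1 \<phi>2)", OF assms sat_Since_mono]
    assms by (simp del: sat.simps)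

lemma mfun_Once_le_iff:
  assumes "sat \<rho> i (Once n \<phi>)"
  shows "int (mfun \<rho> i (Once n \<phi>)) \<le> int n - int d \<longleftrightarrow> d \<le> n \<and> sat \<rho> i (Once (n - d) \<phi>)"
  using Least_le_diff_iff[where P = "\<lambda>m. sat \<rho> i (Once m \<phi>)", OF assms sat_Once_mono]
    assms by (simp del: sat.simps)

lemma sat_Since_unroll:
  assumes "wf_model \<rho>" "1 < i" "i \<le> len \<rho>" "0 < n"
  defines "d \<equiv> ts \<rho> i - ts \<rho> (i - 1)"
  shows "sat \<rho> i (Since n \<phi>1 \<phi>2) \<longleftrightarrow>
    sat \<rho> i \<phi>2 \<or> (sat \<rho> i \<phi>1 \<and> d \<le> n \<and> sat \<rho> (i - 1) (Since (n - d) \<phi>1 \<phi>2))"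
proof
  assume "sat \<rho> i (Since n \<phi>1 \<phi>2)"
  then obtain j where j: "1 \<le> j" "j \<le> i" "sat \<rho> j \<phi>2"
    "\<forall>k. j < k \<and> k \<le> i \<longrightarrow> sat \<rho> k \<phi>1" "ts \<rho> i - ts \<rho> j < n"
    by auto
  show "sat \<rho> i \<phi>2 \<or> (sat \<rho> i \<phi>1 \<and> d \<le> n \<and> sat \<rho> (i - 1) (Since (n - d) \<phi>1 \<phi>2))"
  proof (cases "j = i")
    case False
    with j have "d \<le> n \<and> ts \<rho> (i - 1) - ts \<rho> j < n - d"
      using ts_diff_less_iff_prev[OF assms(1) j(1) _ assms(3)] unfolding d_def by simp
    with j False show ?thesis by auto
  qed (use j in simp)
next
  assume "sat \<rho> i \<phi>2 \<or> (sat \<rho> i \<phi>1 \<and> d \<le> n \<and> sat \<rho> (i - 1) (Since (n - d) \<phi>1 \<phi>2))"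
  then show "sat \<rho> i (Since n \<phi>1 \<phi>2)"
  proof (elim disjE conjE)
    assume "sat \<rho> i \<phi>2"
    with assms show ?thesis by (auto intro!: exI[of _ i])
  next
    assume "sat \<rho> i \<phi>1" "d \<le> n" "sat \<rho> (i - 1) (Since (n - d) \<phi>1 \<phi>2)"
    then obtain j where j: "1 \<le> j" "j \<le> i - 1" "sat \<rho> j \<phi>2"
      "\<forall>k. j < k \<and> k \<le> i - 1 \<longrightarrow> sat \<rho> k \<phi>1" "ts \<rho> (i - 1) - ts \<rho> j < n - d"
      by auto
    have "ts \<rho> i - ts \<rho> j < n"
      using ts_diff_less_iff_prev[OF assms(1) j(1) _ assms(3)] j \<open>d \<le> n\<close> assms(2)
      unfolding d_def by simp
    moreover have "sat \<rho> k \<phi>1" if "j < k" "k \<le> i" for k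
      using j(4) \<open>sat \<rho> i \<phi>1\<close> that by (cases "k = i") auto
    ultimately show ?thesis using j assms(2) by auto
  qed
qed

lemma sat_Once_unroll:
  assumes "wf_model \<rho>" "1 < i" "i \<le> len \<rho>"
  defines "d \<equiv> ts \<rho> i - ts \<rho> (i - 1)"
  shows "sat \<rho> i (Once n \<phi>) \<longleftrightarrow>
    (sat \<rho> (i - 1) \<phi> \<and> d < n) \<or> (d \<le> n \<and> sat \<rho> (i - 1) (Once (n - d) \<phi>))"
proof
  assume "sat \<rho> i (Once n \<phi>)"
  then obtain j where j: "1 \<le> j" "j < i" "sat \<rho> j \<phi>" "ts \<rho> i - ts \<rho> j < n"
    by auto
  show "(sat \<rho> (i - 1) \<phi> \<and> d < n) \<or> (d \<le> n \<and> sat \<rho> (i - 1) (Once (n - d) \<phi>))"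
  proof (cases "j = i - 1")
    case False
    with j have "d \<le> n \<and> ts \<rho> (i - 1) - ts \<rho> j < n - d"
      using ts_diff_less_iff_prev[OF assms(1) j(1,2) assms(3)] unfolding d_def by simp
    with j False show ?thesis by auto
  qed (use j d_def in simp)
next
  assume "(sat \<rho> (i - 1) \<phi> \<and> d < n) \<or> (d \<le> n \<and> sat \<rho> (i - 1) (Once (n - d) \<phi>))"
  then show "sat \<rho> i (Once n \<phi>)"
  proof (elim disjE conjE)
    assume "sat \<rho> (i - 1) \<phi>" "d < n"
    with assms show ?thesis by (auto intro!: exI[of _ "i - 1"])
  next
    assume "d \<le> n" "sat \<rho> (i - 1) (Once (n - d) \<phi>)"
    then obtain j where j: "1 \<le> j" "j < i - 1" "sat \<rho> j \<phi>" "ts \<rho> (i - 1) - ts \<rho> j < n - d"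
      by auto
    have "ts \<rho> i - ts \<rho> j < n"
      using ts_diff_less_iff_prev[OF assms(1) j(1) _ assms(3)] j \<open>d \<le> n\<close>
      unfolding d_def by simp
    with j assms(2) show ?thesis by auto
  qed
qed

theorem theorem1:
  fixes \<rho> :: "'p model" and n i :: nat and \<phi> \<phi>1 \<phi>2 :: "'p formula"
  assumes "wf_model \<rho>" and "n \<ge> 1" and "1 < i" and "i \<le> len \<rho>"
  shows "(sat \<rho> i (Since n \<phi>1 \<phi>2) \<longleftrightarrow>
            sat \<rho> i \<phi>2 \<or>
            (sat \<rho> i \<phi>1 \<and> sat \<rho> (i - 1) (Since n \<phi>1 \<phi>2) \<and>
             int n - (int (ts \<rho> i) - int (ts \<rho> (i - 1))) \<ge> int (mfun \<rho> (i - 1) (Since n \<phi>1 \<phi>2))))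
       \<and> (sat \<rho> i (Once n \<phi>) \<longleftrightarrow>
            (sat \<rho> (i - 1) \<phi> \<and> ts \<rho> i - ts \<rho> (i - 1) < n) \<or>
            (sat \<rho> (i - 1) (Once n \<phi>) \<and>
             int n - (int (ts \<rho> i) - int (ts \<rho> (i - 1))) \<ge> int (mfun \<rho> (i - 1) (Once n \<phi>))))"
proof -
  define d where "d = ts \<rho> i - ts \<rho> (i - 1)"
  have "ts \<rho> (i - 1) \<le> ts \<rho> i"
    using assms by (intro ts_mono) auto
  then have int_d: "int (ts \<rho> i) - int (ts \<rho> (i - 1)) = int d"
    unfolding d_def by simp
  have "sat \<rho> i (Since n \<phi>1 \<phi>2) \<longleftrightarrow> sat \<rho> i \<phi>2 \<or>
      (sat \<rho> i \<phi>1 \<and> sat \<rho> (i - 1) (Since n \<phi>1 \<phi>2) \<and>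
       int (mfun \<rho> (i - 1) (Since n \<phi>1 \<phi>2)) \<le> int n - int d)"
    using sat_Since_unroll[OF assms(1,3,4), of n] mfun_Since_le_iff[of \<rho> "i - 1" n \<phi>1 \<phi>2 d] assms(2)
    unfolding d_def[symmetric] by (auto intro: sat_Since_mono)
  moreover have "sat \<rho> i (Once n \<phi>) \<longleftrightarrow> (sat \<rho> (i - 1) \<phi> \<and> d < n) \<or>
      (sat \<rho> (i - 1) (Once n \<phi>) \<and> int (mfun \<rho> (i - 1) (Once n \<phi>)) \<le> int n - int d)"
    using sat_Once_unroll[OF assms(1,3,4)] mfun_Once_le_iff[of \<rho> "i - 1" n \<phi> d]
    unfolding d_def[symmetric] by (auto intro: sat_Once_mono)
  ultimately show ?thesis
    unfolding int_d d_def[symmetric] by blast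
qed

end
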